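(* For $\mathbf r,\mathbf r'\in\mathbb R^2$ let $$\rho^T(\mathbf r,\mathbf r')=-\frac{1}{\pi^2}\,e^{-|\mathbf r-\mathbf r'|^2}$$ (the truncated two-point correlation of the bulk scaled complex Ginibre ensemble, whose bulk density is $1/\pi$). Then, with $\beta=2$, the Carnie–Chan sum rule holds: $$-\beta\int_{\mathbb R^2}d\mathbf r\,\bigg(\int_{\mathbb R^2}\log|\mathbf r'|\,\rho^T(\mathbf r,\mathbf r')\,d\mathbf r'+\frac1\pi\log|\mathbf r|\bigg)=1,$$ where the integral over $\mathbf r'$ is carried out first, for each fixed $\mathbf r\neq\mathbf 0$.
   Context: The inner expression is the integral over $\mathbf r'$ of $\log|\mathbf r'|\big(\rho^T(\mathbf r,\mathbf r')+\frac1\pi\delta(\mathbf r-\mathbf r')\big)$; the order of integration matters (integrating over $\mathbf r$ first would give $0$). *)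

theory Defs
  imports "HOL-Analysis.Analysis"
begin

definition rhoT :: "real^2 \<Rightarrow> real^2 \<Rightarrow> real" where
  "rhoT r r' = - (1 / (pi ^ 2)) * exp (- ((norm (r - r')) ^ 2))"

definition CC_inner :: "real^2 \<Rightarrow> real" where
  "CC_inner r = (\<integral>r'. ln (norm r') * rhoT r r' \<partial>lborel) + (1 / pi) * ln (norm r)"

end

theory Submission
  imports Defs "HOL-Complex_Analysis.Complex_Analysis" "HOL-Probability.Distributions"
    "HOL-Real_Asymp.Real_Asymp"
begin

text \<open>
  Polar coordinates centred at \<open>r\<close> turn the inner integral into an integral over circles
  \<open>|r' - r| = a\<close>. By Jensen's formula the mean of \<open>ln |r'|\<close> over such a circle is
  \<open>max (ln |r|) (ln a)\<close>; against the Gaussian weight the \<open>ln |r|\<close> part produces exactly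
  \<open>-(1/pi) ln |r|\<close>, so the inner expression is \<open>-(2/pi) K(|r|)\<close> with
  \<open>K(R) = \<integral>\<^sub>R\<^sup>\<infinity> s exp(-s\<^sup>2) ln (s/R) ds \<ge> 0\<close>. It decays fast enough to be integrable, and polar
  coordinates around the origin with Tonelli give
  \<open>\<integral> CC_inner = -4 \<integral>\<^sub>0\<^sup>\<infinity> a K(a) da = -4 \<integral>\<^sub>0\<^sup>\<infinity> s exp(-s\<^sup>2) s\<^sup>2/4 ds = -1/2\<close>.
\<close>

section \<open>Circle means of the logarithm\<close>

lemma circle_mean_ln_norm_one_plus:
  assumes w: "norm w < 1"
  shows "((\<lambda>t. ln (cmod (1 + w * exp (2 * of_real pi * \<i> * of_real t)))) has_integral 0) {0..1}"
proof -
  define f where "f = (\<lambda>u. Ln (1 + w * u))"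
  have nonpos: "1 + w * u \<notin> \<real>\<^sub>\<le>\<^sub>0" if "norm u \<le> 1" for u
  proof -
    have "norm (w * u) < 1"
      using w that by (simp add: norm_mult) (metis le_less_trans mult_left_le norm_ge_zero)
    hence "Re (w * u) > -1" using abs_Re_le_cmod[of "w * u"] by linarith
    thus ?thesis by (auto simp: complex_nonpos_Reals_iff)
  qed
  have hol: "f holomorphic_on cball 0 1"
    unfolding f_def by (intro holomorphic_intros) (use nonpos in auto)
  have "((\<lambda>u. f u / (u - 0)) has_contour_integral (2 * of_real pi * \<i> * f 0)) (circlepath 0 1)"
    by (rule Cauchy_integral_circlepath)
      (auto intro: holomorphic_on_imp_continuous_on hol holomorphic_on_subset[OF hol])
  hence "((\<lambda>u. f u / (u - 0)) has_contour_integral 0) (circlepath 0 1)"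
    by (simp add: f_def)
  hence "((\<lambda>t. f (circlepath 0 1 t) / (circlepath 0 1 t - 0)
           * vector_derivative (circlepath 0 1) (at t within {0..1})) has_integral 0) {0..1}"
    unfolding has_contour_integral_def .
  hence "((\<lambda>t. (2 * pi * \<i>) * f (exp (2 * of_real pi * \<i> * of_real t))) has_integral 0) {0..1}"
  proof (rule has_integral_eq[rotated])
    fix t :: real assume "t \<in> {0..1}"
    then have "vector_derivative (circlepath 0 1) (at t within {0..1})
             = 2 * pi * \<i> * exp (2 * of_real pi * \<i> * t)"
      by (simp add: vector_derivative_circlepath01)
    then show "f (circlepath 0 1 t) / (circlepath 0 1 t - 0)
          * vector_derivative (circlepath 0 1) (at t within {0..1})
        = (2 * pi * \<i>) * f (exp (2 * of_real pi * \<i> * of_real t))"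
      by (simp add: circlepath field_simps)
  qed
  hence "((\<lambda>t. f (exp (2 * of_real pi * \<i> * of_real t))) has_integral 0) {0..1}"
    by (subst (asm) has_integral_mult_right_iff) simp_all
  from has_integral_Re[OF this]
  have "((\<lambda>t. Re (f (exp (2 * of_real pi * \<i> * of_real t)))) has_integral 0) {0..1}"
    by simp
  then show ?thesis
  proof (rule has_integral_eq[rotated])
    fix t :: real
    have "1 + w * exp (2 * of_real pi * \<i> * of_real t) \<noteq> 0"
      using nonpos[of "exp (2 * of_real pi * \<i> * of_real t)"] by (auto simp: norm_exp)
    thus "Re (f (exp (2 * of_real pi * \<i> * of_real t)))
        = ln (cmod (1 + w * exp (2 * of_real pi * \<i> * of_real t)))"
      by (simp add: f_def)
  qed
qed

lemma circle_mean_ln_norm_rescaled: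
  assumes w: "norm w < 1" and m: "m > 0"
    and factor: "\<And>t. cmod (z + a * exp (2 * of_real pi * \<i> * of_real t))
                    = m * cmod (1 + w * exp (2 * of_real pi * \<i> * of_real t))"
  shows "((\<lambda>t. ln (cmod (z + a * exp (2 * of_real pi * \<i> * of_real t)))) has_integral ln m) {0..1}"
proof -
  have "((\<lambda>t. ln m + ln (cmod (1 + w * exp (2 * of_real pi * \<i> * of_real t))))
          has_integral (ln m + 0)) {0..1}"
    by (intro has_integral_add circle_mean_ln_norm_one_plus w)
      (use has_integral_const_real[of "ln m" 0 1] in simp)
  then have "((\<lambda>t. ln m + ln (cmod (1 + w * exp (2 * of_real pi * \<i> * of_real t))))
               has_integral ln m) {0..1}"
    by simp
  then show ?thesis
  proof (rule has_integral_eq[rotated])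
    fix t :: real
    let ?e = "exp (2 * of_real pi * \<i> * of_real t)"
    have "cmod (w * ?e) < 1" using w by (simp add: norm_mult norm_exp)
    hence "1 + w * ?e \<noteq> 0" by (metis add.inverse_unique norm_minus_cancel norm_one less_irrefl)
    thus "ln m + ln (cmod (1 + w * ?e)) = ln (cmod (z + a * ?e))"
      using m by (simp add: factor ln_mult)
  qed
qed

lemma circle_mean_ln_norm:
  fixes z :: complex and a :: real
  assumes z: "z \<noteq> 0" and a: "a > 0" "a \<noteq> cmod z"
  shows "((\<lambda>t. ln (cmod (z + a * exp (2 * of_real pi * \<i> * of_real t))))
           has_integral max (ln (cmod z)) (ln a)) {0..1}"
proof (cases "a < cmod z")
  case True
  have "((\<lambda>t. ln (cmod (z + a * exp (2 * of_real pi * \<i> * of_real t)))) has_integral ln (cmod z)) {0..1}"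
  proof (rule circle_mean_ln_norm_rescaled[of "a / z"])
    fix t :: real
    have "z + a * exp (2 * of_real pi * \<i> * of_real t) = z * (1 + a / z * exp (2 * of_real pi * \<i> * of_real t))"
      using z by (simp add: field_simps)
    thus "cmod (z + a * exp (2 * of_real pi * \<i> * of_real t))
        = cmod z * cmod (1 + a / z * exp (2 * of_real pi * \<i> * of_real t))"
      by (simp add: norm_mult)
  qed (use True z a in \<open>simp_all add: norm_divide\<close>)
  moreover have "max (ln (cmod z)) (ln a) = ln (cmod z)"
    using True a z by simp
  ultimately show ?thesis by simp
next
  case False
  hence lt: "cmod z < a" using a by simp
  have "((\<lambda>t. ln (cmod (z + a * exp (2 * of_real pi * \<i> * of_real t)))) has_integral ln a) {0..1}"
  proof (rule circle_mean_ln_norm_rescaled[of "cnj z / a"])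
    fix t :: real
    let ?e = "exp (2 * of_real pi * \<i> * of_real t)"
    have e: "cmod ?e = 1" by (simp add: norm_exp_eq_Re)
    hence "cnj ?e * ?e = 1" using complex_norm_square[of ?e] by (simp add: mult.commute)
    hence "cnj (z + a * ?e) * ?e = a * (1 + cnj z / a * ?e)"
      using a by (simp add: field_simps)
    hence "cmod (z + a * ?e) = cmod (a * (1 + cnj z / a * ?e))"
      by (metis complex_mod_cnj e mult.right_neutral norm_mult)
    thus "cmod (z + a * ?e) = a * cmod (1 + cnj z / a * ?e)"
      using a by (simp add: norm_mult)
  qed (use lt a in \<open>simp_all add: norm_divide\<close>)
  moreover have "max (ln (cmod z)) (ln a) = ln a"
    using lt a z by simp
  ultimately show ?thesis by simp
qed

lemma lborel_integral_Ico_of_has_integral: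
  fixes \<phi> :: "real \<Rightarrow> real"
  assumes cont: "continuous_on {a..b} \<phi>" and I: "(\<phi> has_integral I) {a..b}"
  shows "integrable lborel (\<lambda>t. indicator {a..<b} t * \<phi> t)"
    "(\<integral>t. indicator {a..<b} t * \<phi> t \<partial>lborel) = I"
proof -
  have set_int: "set_integrable lborel {a..b} \<phi>" by (rule borel_integrable_atLeastAtMost'[OF cont])
  then have int: "integrable lborel (\<lambda>t. indicator {a..b} t * \<phi> t)" by (simp add: set_integrable_def)
  have [measurable]: "(\<lambda>t. indicator {a..b} t * \<phi> t) \<in> borel_measurable lborel"
    using int by (rule borel_measurable_integrable)
  have "(\<lambda>t. indicator {a..<b} t * \<phi> t) = (\<lambda>t. indicator {a..<b} t * (indicator {a..b} t * \<phi> t))"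
    by (auto simp: indicator_def)
  also have "\<dots> \<in> borel_measurable lborel" by measurable
  finally have [measurable]: "(\<lambda>t. indicator {a..<b} t * \<phi> t) \<in> borel_measurable lborel" .
  have ae: "AE t in lborel. indicator {a..b} t * \<phi> t = indicator {a..<b} t * \<phi> t"
    using AE_lborel_singleton[of b] by eventually_elim (auto simp: indicator_def)
  show "integrable lborel (\<lambda>t. indicator {a..<b} t * \<phi> t)"
    using integrable_cong_AE[OF _ _ ae] int by simp
  have "(\<integral>t. indicator {a..<b} t * \<phi> t \<partial>lborel) = (\<integral>t. indicator {a..b} t * \<phi> t \<partial>lborel)"
    using integral_cong_AE[OF _ _ ae] by simp
  also have "\<dots> = integral {a..b} \<phi>"
    using set_borel_integral_eq_integral(2)[OF set_int] by (simp add: set_lebesgue_integral_def)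
  also have "\<dots> = I" using I by (rule integral_unique)
  finally show "(\<integral>t. indicator {a..<b} t * \<phi> t \<partial>lborel) = I" .
qed

section \<open>Polar coordinates in the plane\<close>

definition vec_of_pair :: "real \<times> real \<Rightarrow> real^2" where
  "vec_of_pair p = fst p *\<^sub>R axis 1 1 + snd p *\<^sub>R axis 2 1"

lemma vec_of_pair_nth [simp]: "vec_of_pair p $ 1 = fst p" "vec_of_pair p $ 2 = snd p"
  by (simp_all add: vec_of_pair_def axis_def)

lemma vec_of_pair_measurable [measurable]:
  "vec_of_pair \<in> borel_measurable (lborel \<Otimes>\<^sub>M lborel)"
  unfolding vec_of_pair_def by measurable

lemma norm_vec2: "norm (x :: real^2) = sqrt ((x$1)\<^sup>2 + (x$2)\<^sup>2)"
  by (simp add: norm_vec_def L2_set_def UNIV_2)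

lemma Basis_vec2: "(Basis :: (real^2) set) = {axis 1 1, axis 2 1}"
  by (auto simp: Basis_vec_def UNIV_2)

lemma distr_vec_of_pair_lborel: "distr (lborel \<Otimes>\<^sub>M lborel) borel vec_of_pair = lborel"
proof (rule lborel_eqI[symmetric])
  fix l u :: "real^2"
  assume lu: "\<And>b. b \<in> Basis \<Longrightarrow> l \<bullet> b \<le> u \<bullet> b"
  have "l$1 \<le> u$1" "l$2 \<le> u$2"
    using lu[of "axis 1 1"] lu[of "axis 2 1"] by (simp_all add: Basis_vec2 inner_axis)
  moreover have "vec_of_pair -` box l u \<inter> space (lborel \<Otimes>\<^sub>M lborel)
               = {l$1<..<u$1} \<times> {l$2<..<u$2}"
    by (auto simp: mem_box_cart forall_2 space_pair_measure)
  ultimately have "emeasure (distr (lborel \<Otimes>\<^sub>M lborel) borel vec_of_pair) (box l u)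
      = ennreal ((u$1 - l$1) * (u$2 - l$2))"
    by (simp add: emeasure_distr lborel.emeasure_pair_measure_Times ennreal_mult)
  also have "(u$1 - l$1) * (u$2 - l$2) = (\<Prod>b\<in>Basis. (u - l) \<bullet> b)"
    by (simp add: Basis_vec2 inner_axis axis_eq_axis)
  finally show "emeasure (distr (lborel \<Otimes>\<^sub>M lborel) borel vec_of_pair) (box l u)
      = (\<Prod>b\<in>Basis. (u - l) \<bullet> b)" .
qed simp

lemma integrable_lborel_vec2_iff:
  fixes h :: "real^2 \<Rightarrow> real"
  assumes [measurable]: "h \<in> borel_measurable borel"
  shows "integrable lborel h \<longleftrightarrow> integrable (lborel \<Otimes>\<^sub>M lborel) (\<lambda>p. h (vec_of_pair p))"
  by (subst distr_vec_of_pair_lborel[symmetric], subst integrable_distr_eq) auto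

lemma integral_lborel_vec2:
  fixes h :: "real^2 \<Rightarrow> real"
  assumes [measurable]: "h \<in> borel_measurable borel"
  shows "integral\<^sup>L lborel h = integral\<^sup>L (lborel \<Otimes>\<^sub>M lborel) (\<lambda>p. h (vec_of_pair p))"
  by (subst distr_vec_of_pair_lborel[symmetric], subst integral_distr) auto

definition complex_of_vec2 :: "real^2 \<Rightarrow> complex" where
  "complex_of_vec2 x = Complex (x$1) (x$2)"

lemma complex_of_vec2_add: "complex_of_vec2 (x + y) = complex_of_vec2 x + complex_of_vec2 y"
  by (simp add: complex_eq_iff complex_of_vec2_def)

lemma norm_complex_of_vec2: "cmod (complex_of_vec2 x) = norm x"
  by (simp add: complex_of_vec2_def complex_norm norm_vec2)

text \<open>The angle is measured in full turns, to match \<open>circlepath\<close>.\<close>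
definition polar_vec :: "real \<Rightarrow> real \<Rightarrow> real^2" where
  "polar_vec a b = vec_of_pair (a * cos (2 * pi * b), a * sin (2 * pi * b))"

lemma complex_of_vec2_polar_vec:
  "complex_of_vec2 (polar_vec a b) = of_real a * exp (2 * of_real pi * \<i> * of_real b)"
  by (simp add: complex_eq_iff complex_of_vec2_def polar_vec_def Re_exp Im_exp)

lemma norm_polar_vec: "a \<ge> 0 \<Longrightarrow> norm (polar_vec a b) = a"
  by (simp add: polar_vec_def norm_vec2 power_mult_distrib flip: distrib_left)

lemma polar_vec_measurable [measurable]:
  "(\<lambda>p. polar_vec (fst p) (snd p)) \<in> borel_measurable (lborel \<Otimes>\<^sub>M lborel)"
  unfolding polar_vec_def by measurable

definition polar :: "real^2 \<Rightarrow> real^2" where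
  "polar p = polar_vec (p$1) (p$2)"

definition polar_derivative :: "real^2 \<Rightarrow> real^2 \<Rightarrow> real^2" where
  "polar_derivative p h = vec_of_pair
     (h$1 * cos (2 * pi * p$2) - p$1 * sin (2 * pi * p$2) * (2 * pi * h$2),
      h$1 * sin (2 * pi * p$2) + p$1 * cos (2 * pi * p$2) * (2 * pi * h$2))"

text \<open>Half-open in the angle, so that \<^const>\<open>polar\<close> is injective on it; the ray it misses is null.\<close>
definition polar_domain :: "(real^2) set" where
  "polar_domain = {p. 0 < p$1 \<and> 0 \<le> p$2 \<and> p$2 < 1}"

lemma polar_domain_borel [measurable]: "polar_domain \<in> sets borel"
  unfolding polar_domain_def by measurable

lemma has_derivative_vec_nth [derivative_intros]:
  "((\<lambda>x::real^'n. x$i) has_derivative (\<lambda>h. h$i)) F"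
  by (rule bounded_linear_imp_has_derivative) (rule bounded_linear_vec_nth)

lemma has_derivative_polar: "(polar has_derivative polar_derivative p) (at p within S)"
  unfolding polar_def polar_vec_def polar_derivative_def vec_of_pair_def fst_conv snd_conv
  by (auto intro!: derivative_eq_intros simp: fun_eq_iff algebra_simps)

lemma det_polar_derivative: "det (matrix (polar_derivative p)) = 2 * pi * p$1"
proof -
  let ?c = "cos (pi * (2 * p$2))" and ?s = "sin (pi * (2 * p$2))"
  have "det (matrix (polar_derivative p))
      = pi * (p$1 * (2 * (?c * ?c))) + pi * (p$1 * (2 * (?s * ?s)))"
    by (simp add: det_2 matrix_def polar_derivative_def axis_def algebra_simps)
  also have "\<dots> = 2 * pi * p$1 * (?c * ?c + ?s * ?s)" by algebra
  also have "?c * ?c + ?s * ?s = 1" by (rule sin_cos_squared_add3)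
  finally show ?thesis by simp
qed

lemma inj_on_polar: "inj_on polar polar_domain"
proof (rule inj_onI)
  fix p q assume p: "p \<in> polar_domain" and q: "q \<in> polar_domain" and eq: "polar p = polar q"
  have arg: "Arg2pi (complex_of_vec2 (polar x)) = 2 * pi * x$2"
    and mod: "cmod (complex_of_vec2 (polar x)) = x$1" if "x \<in> polar_domain" for x
  proof -
    have "complex_of_vec2 (polar x) = of_real (x$1) * exp (\<i> * of_real (2 * pi * x$2))"
      by (simp add: polar_def complex_of_vec2_polar_vec mult_ac)
    then show "Arg2pi (complex_of_vec2 (polar x)) = 2 * pi * x$2"
      "cmod (complex_of_vec2 (polar x)) = x$1"
      using that by (auto simp: polar_domain_def norm_mult intro!: Arg2pi_unique)
  qed
  show "p = q"
    using arg[OF p] arg[OF q] mod[OF p] mod[OF q] eq by (simp add: vec_eq_iff forall_2)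
qed

lemma polar_image_complement: "- polar ` polar_domain \<subseteq> {x. x$2 = 0}"
proof
  fix x assume x: "x \<in> - polar ` polar_domain"
  show "x \<in> {x. x$2 = 0}"
  proof (rule ccontr)
    assume "x \<notin> {x. x$2 = 0}"
    then have z0: "complex_of_vec2 x \<noteq> 0" by (simp add: complex_of_vec2_def complex_eq_iff)
    define p where
      "p = vec_of_pair (cmod (complex_of_vec2 x), Arg2pi (complex_of_vec2 x) / (2 * pi))"
    have "p \<in> polar_domain"
      using z0 Arg2pi_ge_0 Arg2pi_lt_2pi by (simp add: p_def polar_domain_def)
    moreover have "polar p = x"
      using cos_Arg2pi[of "complex_of_vec2 x"] sin_Arg2pi[of "complex_of_vec2 x"]
      by (simp add: polar_def polar_vec_def p_def vec_eq_iff forall_2 complex_of_vec2_def)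
    ultimately show False using x by auto
  qed
qed

lemma has_absolute_integral_change_of_variables_real:
  fixes f :: "real^'m::{finite,wellorder} \<Rightarrow> real" and g :: "real^'m::_ \<Rightarrow> real^'m::_"
  assumes "S \<in> sets lebesgue"
    and "\<And>x. x \<in> S \<Longrightarrow> (g has_derivative g' x) (at x within S)"
    and "inj_on g S"
  shows "(\<lambda>x. \<bar>det (matrix (g' x))\<bar> * f (g x)) absolutely_integrable_on S \<and>
           integral S (\<lambda>x. \<bar>det (matrix (g' x))\<bar> * f (g x)) = b
     \<longleftrightarrow> f absolutely_integrable_on (g ` S) \<and> integral (g ` S) f = b"
  using has_absolute_integral_change_of_variables[OF assms, of "\<lambda>x. vec (f x) :: real^1" "vec b"]
  by (simp add: absolutely_integrable_on_1_iff integral_on_1_eq)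

lemma negligible_complement_polar_image: "negligible (- (\<lambda>p. c + polar p) ` polar_domain)"
proof (rule negligible_subset)
  show "negligible ((+) c ` {x :: real^2. x$2 = 0})"
    by (intro negligible_translation negligible_standard_hyperplane_cart)
  show "- (\<lambda>p. c + polar p) ` polar_domain \<subseteq> (+) c ` {x. x$2 = 0}"
  proof
    fix x assume "x \<in> - (\<lambda>p. c + polar p) ` polar_domain"
    then have "x - c \<in> - polar ` polar_domain" by (auto simp: image_iff algebra_simps)
    then have "(x - c) $ 2 = 0" using polar_image_complement by blast
    then show "x \<in> (+) c ` {x. x$2 = 0}" by (auto simp: image_iff intro!: exI[of _ "x - c"])
  qed
qed

lemma
  fixes f :: "'a::euclidean_space \<Rightarrow> real"
  assumes [measurable]: "f \<in> borel_measurable borel"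
    and f: "f absolutely_integrable_on S" and null: "negligible (- S)"
  shows integrable_lborel_of_negligible_complement: "integrable lborel f"
    and integral_lborel_of_negligible_complement: "integral\<^sup>L lborel f = integral S f"
proof -
  have negl: "negligible {x \<in> UNIV - S. f x \<noteq> 0}"
    using null by (rule negligible_subset) auto
  then have "f absolutely_integrable_on UNIV"
    using f absolutely_integrable_spike_set_eq[where f = f and S = S and T = UNIV] by auto
  then have "integrable lebesgue f" by (simp add: set_integrable_def)
  then show "integrable lborel f" by (simp add: integrable_completion)
  have "integral UNIV f = integral S f"
    using negl integral_spike_set[where f = f and S = S and T = UNIV] by auto
  then show "integral\<^sup>L lborel f = integral S f"
    using integral_lebesgue[OF \<open>integrable lebesgue f\<close>] by (simp add: integral_completion)
qed

lemma polar_change_of_variables: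
  fixes f :: "real^2 \<Rightarrow> real" and c :: "real^2"
  assumes "f \<in> borel_measurable borel"
    and int: "(\<lambda>p. 2 * pi * p$1 * f (c + polar p)) absolutely_integrable_on polar_domain"
  shows "integrable lborel f"
    "integral\<^sup>L lborel f = integral polar_domain (\<lambda>p. 2 * pi * p$1 * f (c + polar p))"
proof -
  let ?g = "\<lambda>p. c + polar p" and ?F = "\<lambda>p. 2 * pi * p$1 * f (c + polar p)"
  have jacobian: "\<bar>det (matrix (polar_derivative p))\<bar> * f (?g p) = ?F p" if "p \<in> polar_domain" for p
    using that by (simp add: det_polar_derivative polar_domain_def)
  have "(\<lambda>p. \<bar>det (matrix (polar_derivative p))\<bar> * f (?g p)) absolutely_integrable_on polar_domain"
    using int by (simp add: jacobian cong: set_integrable_cong)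
  moreover have "integral polar_domain (\<lambda>p. \<bar>det (matrix (polar_derivative p))\<bar> * f (?g p))
      = integral polar_domain ?F"
    by (rule integral_cong) (rule jacobian)
  moreover have "polar_domain \<in> sets lebesgue" by simp
  moreover have "inj_on ?g polar_domain" using inj_on_polar by (auto simp: inj_on_def)
  moreover have "(?g has_derivative polar_derivative p) (at p within polar_domain)" for p
    by (auto intro!: derivative_eq_intros has_derivative_polar)
  ultimately have "f absolutely_integrable_on ?g ` polar_domain"
    "integral (?g ` polar_domain) f = integral polar_domain ?F"
    using has_absolute_integral_change_of_variables_real[of polar_domain ?g polar_derivative f]
    by blast+
  with assms(1) negligible_complement_polar_image[of c]
  show "integrable lborel f" "integral\<^sup>L lborel f = integral polar_domain ?F"
    by (simp_all add: integrable_lborel_of_negligible_complement integral_lborel_of_negligible_complement)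
qed

lemma lborel_integral_polar:
  fixes f :: "real^2 \<Rightarrow> real" and c :: "real^2"
  assumes f [measurable]: "f \<in> borel_measurable borel"
  defines "H \<equiv> \<lambda>a b. indicator {0<..} a * indicator {0..<1} b * (2 * pi * a * f (c + polar_vec a b))"
  assumes integrable_norm: "integrable lborel (\<lambda>a. \<integral>b. norm (H a b) \<partial>lborel)"
    and integrable_slices: "AE a in lborel. integrable lborel (H a)"
  shows "integrable lborel f" "integral\<^sup>L lborel f = (\<integral>a. (\<integral>b. H a b \<partial>lborel) \<partial>lborel)"
proof -
  define F where "F = (\<lambda>p. 2 * pi * p$1 * f (c + polar p))"
  have [measurable]: "F \<in> borel_measurable borel"
    unfolding F_def polar_def polar_vec_def vec_of_pair_def by measurable
  define G where "G = (\<lambda>q. indicator polar_domain (vec_of_pair q) * F (vec_of_pair q))"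
  have [measurable]: "G \<in> borel_measurable (lborel \<Otimes>\<^sub>M lborel)"
    unfolding G_def by measurable
  have G_eq_H: "G (a, b) = H a b" for a b
    by (simp add: G_def H_def F_def polar_def polar_domain_def indicator_def)
  have G: "integrable (lborel \<Otimes>\<^sub>M lborel) G"
    by (rule lborel_pair.Fubini_integrable) (use integrable_norm integrable_slices in \<open>simp_all add: G_eq_H\<close>)
  have "integral\<^sup>L (lborel \<Otimes>\<^sub>M lborel) G = (\<integral>a. (\<integral>b. H a b \<partial>lborel) \<partial>lborel)"
    using lborel_pair.integral_fst'[OF G] by (simp add: G_eq_H)
  with G have "integrable lborel (\<lambda>x. indicator polar_domain x * F x)"
    and "(\<integral>x. indicator polar_domain x * F x \<partial>lborel) = (\<integral>a. (\<integral>b. H a b \<partial>lborel) \<partial>lborel)"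
    by (simp_all add: integrable_lborel_vec2_iff integral_lborel_vec2 G_def)
  then have "F absolutely_integrable_on polar_domain"
    and "integral polar_domain F = (\<integral>a. (\<integral>b. H a b \<partial>lborel) \<partial>lborel)"
    using set_lebesgue_integral_eq_integral(2)[of polar_domain F]
    by (simp_all add: set_integrable_def set_lebesgue_integral_def integrable_completion integral_completion)
  then show "integrable lborel f" "integral\<^sup>L lborel f = (\<integral>a. (\<integral>b. H a b \<partial>lborel) \<partial>lborel)"
    using polar_change_of_variables[OF f, of c] by (simp_all add: F_def)
qed

lemma abs_ln_le:
  fixes y B :: real
  assumes y: "0 \<le> y" "y \<le> B"
  shows "\<bar>ln y\<bar> \<le> 2 * B - ln y"
proof (cases "y = 0")
  case False
  then have "ln y \<le> y - 1" using y by (intro ln_le_minus_one) auto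
  then show ?thesis using y by (cases "ln y \<ge> 0") auto
qed (use y in simp)

lemma x_abs_ln_le:
  fixes x :: real
  assumes x: "x > 0"
  shows "x * \<bar>ln x\<bar> \<le> 1 + x\<^sup>2"
proof (cases "ln x \<ge> 0")
  case True
  have "ln x \<le> x" using ln_less_self[OF x] by linarith
  then have "x * ln x \<le> x * x" using x by (simp add: mult_left_mono)
  then show ?thesis using True by (simp add: power2_eq_square)
next
  case False
  have "- ln x < 1 / x" using ln_less_self[of "1 / x"] x by (simp add: ln_div)
  then have "x * - ln x \<le> x * (1 / x)" using mult_left_mono[of "- ln x" "1 / x" x] x by simp
  then have "x * \<bar>ln x\<bar> \<le> 1" using False x by simp
  then show ?thesis using zero_le_power2[of x] by linarith
qed

lemma has_bochner_integral_gaussian_odd_moment_pos: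
  "has_bochner_integral lborel (\<lambda>a::real. indicator {0<..} a * (a ^ (2 * k + 1) * exp (- a\<^sup>2))) (fact k / 2)"
  using gaussian_moment_odd_pos[of k]
  by (rule has_bochner_integral_cong[THEN iffD1, rotated 3]) (auto simp: indicator_def)

lemma integrable_gaussian_moment_pos:
  "integrable lborel (\<lambda>a::real. indicator {0..} a * (a ^ k * exp (- a\<^sup>2)))"
proof -
  obtain m where "k = 2 * m \<or> k = 2 * m + 1" by (metis oddE evenE)
  then show ?thesis
    using integrable.intros[OF gaussian_moment_even_pos[of m]]
      integrable.intros[OF gaussian_moment_odd_pos[of m]]
    by (auto simp: mult_ac)
qed

section \<open>The inner integral\<close>

lemma ln_norm_circle_complex:
  "ln (norm (r + polar_vec a b))
     = ln (cmod (complex_of_vec2 r + of_real a * exp (2 * of_real pi * \<i> * of_real b)))"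
  by (simp add: norm_complex_of_vec2[symmetric] complex_of_vec2_add complex_of_vec2_polar_vec)

lemma
  fixes r :: "real^2"
  assumes r: "r \<noteq> 0" and a: "a > 0" "a \<noteq> norm r"
  shows integrable_ln_norm_circle: "integrable lborel (\<lambda>b. indicator {0..<1} b * ln (norm (r + polar_vec a b)))"
    and integral_ln_norm_circle:
      "(\<integral>b. indicator {0..<1} b * ln (norm (r + polar_vec a b)) \<partial>lborel) = max (ln (norm r)) (ln a)"
proof -
  have "cmod (complex_of_vec2 r) = norm r" by (rule norm_complex_of_vec2)
  then have r': "complex_of_vec2 r \<noteq> 0" and a': "a \<noteq> cmod (complex_of_vec2 r)"
    using r a by auto
  have "complex_of_vec2 r + of_real a * exp (2 * of_real pi * \<i> * of_real b) \<noteq> 0" for b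
  proof
    assume "complex_of_vec2 r + of_real a * exp (2 * of_real pi * \<i> * of_real b) = 0"
    then have "cmod (complex_of_vec2 r) = cmod (of_real a * exp (2 * of_real pi * \<i> * of_real b))"
      by (simp add: add_eq_0_iff)
    with a a' show False by (simp add: norm_mult norm_exp_eq_Re)
  qed
  then have "continuous_on {0..1} (\<lambda>b. ln (norm (r + polar_vec a b)))"
    unfolding ln_norm_circle_complex by (intro continuous_intros) auto
  moreover have "((\<lambda>b. ln (norm (r + polar_vec a b))) has_integral max (ln (norm r)) (ln a)) {0..1}"
    unfolding ln_norm_circle_complex
    using circle_mean_ln_norm[OF r' a(1) a'] by (simp add: norm_complex_of_vec2)
  ultimately show "integrable lborel (\<lambda>b. indicator {0..<1} b * ln (norm (r + polar_vec a b)))"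
    "(\<integral>b. indicator {0..<1} b * ln (norm (r + polar_vec a b)) \<partial>lborel) = max (ln (norm r)) (ln a)"
    by (rule lborel_integral_Ico_of_has_integral)+
qed

lemma integral_abs_ln_norm_circle_le:
  fixes r :: "real^2"
  assumes r: "r \<noteq> 0" and a: "a > 0" "a \<noteq> norm r"
  shows "(\<integral>b. indicator {0..<1} b * \<bar>ln (norm (r + polar_vec a b))\<bar> \<partial>lborel)
         \<le> 2 * (norm r + a) + \<bar>ln (norm r)\<bar> + \<bar>ln a\<bar>"
proof -
  let ?f = "\<lambda>b. indicator {0..<1} b * ln (norm (r + polar_vec a b))"
  have abs_f: "(\<lambda>b. indicator {0..<1} b * \<bar>ln (norm (r + polar_vec a b))\<bar>) = (\<lambda>b. norm (?f b))"
    by (simp add: abs_mult)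
  have int: "integrable lborel (\<lambda>b. indicator {0..<1} b * \<bar>ln (norm (r + polar_vec a b))\<bar>)"
    unfolding abs_f using integrable_ln_norm_circle[OF r a] by (rule integrable_norm)
  have int_const: "integrable lborel (\<lambda>b::real. indicator {0..<1} b * (2 * (norm r + a)))"
    by (intro integrable_mult_left integrable_real_indicator) auto
  have "(\<integral>b. indicator {0..<1} b * \<bar>ln (norm (r + polar_vec a b))\<bar> \<partial>lborel)
      \<le> (\<integral>b. indicator {0..<1} b * (2 * (norm r + a)) - ?f b \<partial>lborel)"
  proof (rule integral_mono[OF int])
    show "integrable lborel (\<lambda>b. indicator {0..<1} b * (2 * (norm r + a)) - ?f b)"
      using int_const integrable_ln_norm_circle[OF r a] by (rule Bochner_Integration.integrable_diff)
    fix b :: real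
    have "norm (r + polar_vec a b) \<le> norm r + a"
      using norm_triangle_ineq[of r "polar_vec a b"] a by (simp add: norm_polar_vec)
    then have "\<bar>ln (norm (r + polar_vec a b))\<bar> \<le> 2 * (norm r + a) - ln (norm (r + polar_vec a b))"
      by (intro abs_ln_le) auto
    then show "indicator {0..<1} b * \<bar>ln (norm (r + polar_vec a b))\<bar>
        \<le> indicator {0..<1} b * (2 * (norm r + a)) - ?f b"
      by (auto simp: indicator_def)
  qed
  also have "\<dots> = 2 * (norm r + a) - max (ln (norm r)) (ln a)"
    using int_const integrable_ln_norm_circle[OF r a] integral_ln_norm_circle[OF r a]
    by (simp add: integral_diff)
  also have "\<dots> \<le> 2 * (norm r + a) + \<bar>ln (norm r)\<bar> + \<bar>ln a\<bar>" by linarith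
  finally show ?thesis .
qed

text \<open>\<open>2 \<pi> a \<rho>\<^sup>T(r, r')\<close> for \<open>|r' - r| = a\<close>, the radial density of \<open>\<rho>\<^sup>T(r, -)\<close> around \<open>r\<close>.\<close>
definition rhoT_radial :: "real \<Rightarrow> real" where
  "rhoT_radial a = indicator {0<..} a * (- (2 / pi) * a * exp (- a\<^sup>2))"

lemma rhoT_radial_measurable [measurable]: "rhoT_radial \<in> borel_measurable borel"
  unfolding rhoT_radial_def by measurable

lemma ln_norm_rhoT_measurable [measurable]:
  "(\<lambda>r'. ln (norm r') * rhoT r r') \<in> borel_measurable borel"
  unfolding rhoT_def by measurable

lemma ln_norm_rhoT_polar:
  "indicator {0<..} a * indicator {0..<1} b
     * (2 * pi * a * (ln (norm (r + polar_vec a b)) * rhoT r (r + polar_vec a b)))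
   = rhoT_radial a * (indicator {0..<1} b * ln (norm (r + polar_vec a b)))"
proof (cases "a > 0")
  case True
  then have "norm (r - (r + polar_vec a b)) = a" by (simp add: norm_polar_vec)
  with True show ?thesis
    by (simp add: rhoT_radial_def rhoT_def indicator_def power2_eq_square field_simps)
qed (simp add: rhoT_radial_def)

lemma abs_rhoT_radial_mult_circle_le:
  fixes r :: "real^2"
  assumes r: "r \<noteq> 0" and a: "a > 0" "a \<noteq> norm r"
  shows "\<bar>rhoT_radial a\<bar> * (\<integral>b. indicator {0..<1} b * \<bar>ln (norm (r + polar_vec a b))\<bar> \<partial>lborel)
    \<le> 2 / pi * (exp (- a\<^sup>2) + (2 * norm r + \<bar>ln (norm r)\<bar>) * (a * exp (- a\<^sup>2))
                 + 3 * (a\<^sup>2 * exp (- a\<^sup>2)))"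
proof -
  define E where "E = 2 / pi * exp (- a\<^sup>2)"
  have E: "E > 0" by (simp add: E_def)
  have "\<bar>rhoT_radial a\<bar> * (\<integral>b. indicator {0..<1} b * \<bar>ln (norm (r + polar_vec a b))\<bar> \<partial>lborel)
      \<le> E * a * (2 * (norm r + a) + \<bar>ln (norm r)\<bar> + \<bar>ln a\<bar>)"
  proof -
    have "\<bar>rhoT_radial a\<bar> = E * a" using a by (simp add: rhoT_radial_def E_def abs_mult)
    then show ?thesis
      using integral_abs_ln_norm_circle_le[OF r a] a E by (simp add: mult_left_mono)
  qed
  also have "\<dots> = E * ((2 * norm r + \<bar>ln (norm r)\<bar>) * a + 2 * a\<^sup>2 + a * \<bar>ln a\<bar>)"
    by (simp add: algebra_simps power2_eq_square)
  also have "\<dots> \<le> E * ((2 * norm r + \<bar>ln (norm r)\<bar>) * a + 2 * a\<^sup>2 + (1 + a\<^sup>2))"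
    using x_abs_ln_le[OF a(1)] E by (intro mult_left_mono) auto
  also have "\<dots> = 2 / pi * (exp (- a\<^sup>2) + (2 * norm r + \<bar>ln (norm r)\<bar>) * (a * exp (- a\<^sup>2))
                 + 3 * (a\<^sup>2 * exp (- a\<^sup>2)))"
    by (simp add: E_def algebra_simps)
  finally show ?thesis .
qed

lemma AE_rhoT_radial_eq_0_or_generic: "AE a in lborel. 0 < a \<and> a \<noteq> R \<or> rhoT_radial a = 0"
  using AE_lborel_singleton[of R] by eventually_elim (auto simp: rhoT_radial_def)

lemma integrable_integral_norm_rhoT_radial_circle:
  fixes r :: "real^2"
  assumes r: "r \<noteq> 0"
  shows "integrable lborel
    (\<lambda>a. \<integral>b. norm (rhoT_radial a * (indicator {0..<1} b * ln (norm (r + polar_vec a b)))) \<partial>lborel)"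
proof (rule Bochner_Integration.integrable_bound)
  let ?M = "\<lambda>a. 2 / pi * (indicator {0..} a * (a ^ 0 * exp (- a\<^sup>2))
     + (2 * norm r + \<bar>ln (norm r)\<bar>) * (indicator {0..} a * (a ^ 1 * exp (- a\<^sup>2)))
     + 3 * (indicator {0..} a * (a ^ 2 * exp (- a\<^sup>2))))"
  show "integrable lborel ?M"
    by (intro integrable_mult_right Bochner_Integration.integrable_add integrable_gaussian_moment_pos)
  show "AE a in lborel.
      norm (\<integral>b. norm (rhoT_radial a * (indicator {0..<1} b * ln (norm (r + polar_vec a b)))) \<partial>lborel)
        \<le> norm (?M a)"
    using AE_rhoT_radial_eq_0_or_generic[of "norm r"]
  proof eventually_elim
    case (elim a)
    have "norm (\<integral>b. norm (rhoT_radial a * (indicator {0..<1} b * ln (norm (r + polar_vec a b)))) \<partial>lborel)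
        = \<bar>rhoT_radial a\<bar> * (\<integral>b. indicator {0..<1} b * \<bar>ln (norm (r + polar_vec a b))\<bar> \<partial>lborel)"
      by (simp add: abs_mult)
    also have "\<dots> \<le> norm (?M a)"
      using elim abs_rhoT_radial_mult_circle_le[OF r, of a] by auto
    finally show ?case .
  qed
qed measurable

lemma
  fixes r :: "real^2"
  assumes r: "r \<noteq> 0"
  shows integrable_ln_norm_rhoT: "integrable lborel (\<lambda>r'. ln (norm r') * rhoT r r')"
    and integral_ln_norm_rhoT:
      "(\<integral>r'. ln (norm r') * rhoT r r' \<partial>lborel) = (\<integral>a. rhoT_radial a * max (ln (norm r)) (ln a) \<partial>lborel)"
proof -
  let ?H = "\<lambda>a b. rhoT_radial a * (indicator {0..<1} b * ln (norm (r + polar_vec a b)))"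
  note generic = AE_rhoT_radial_eq_0_or_generic[of "norm r"]
  have slices: "AE a in lborel. integrable lborel (?H a)"
    using generic by eventually_elim (auto intro: integrable_ln_norm_circle[OF r])
  note polar = lborel_integral_polar[OF ln_norm_rhoT_measurable[of r], of r, unfolded ln_norm_rhoT_polar,
      OF integrable_integral_norm_rhoT_radial_circle[OF r] slices]
  then show "integrable lborel (\<lambda>r'. ln (norm r') * rhoT r r')" by simp
  have "AE a in lborel. (\<integral>b. ?H a b \<partial>lborel) = rhoT_radial a * max (ln (norm r)) (ln a)"
    using generic by eventually_elim (auto simp: integral_ln_norm_circle[OF r])
  then have "(\<integral>a. (\<integral>b. ?H a b \<partial>lborel) \<partial>lborel)
      = (\<integral>a. rhoT_radial a * max (ln (norm r)) (ln a) \<partial>lborel)"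
    by (intro integral_cong_AE) measurable
  with polar(2) show "(\<integral>r'. ln (norm r') * rhoT r r' \<partial>lborel)
      = (\<integral>a. rhoT_radial a * max (ln (norm r)) (ln a) \<partial>lborel)"
    by simp
qed

definition log_gauss_tail_density :: "real \<Rightarrow> real \<Rightarrow> real" where
  "log_gauss_tail_density R s = indicator {0<..} s * (s * exp (- s\<^sup>2) * max 0 (ln s - ln R))"

definition log_gauss_tail :: "real \<Rightarrow> real" where
  "log_gauss_tail R = (\<integral>s. log_gauss_tail_density R s \<partial>lborel)"

lemma log_gauss_tail_density_pair_measurable [measurable]:
  "(\<lambda>x. log_gauss_tail_density (fst x) (snd x)) \<in> borel_measurable (lborel \<Otimes>\<^sub>M lborel)"
  unfolding log_gauss_tail_density_def by measurable

lemma log_gauss_tail_density_borel_measurable [measurable]: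
  "log_gauss_tail_density R \<in> borel_measurable lborel"
  unfolding log_gauss_tail_density_def by measurable

lemma log_gauss_tail_measurable [measurable]: "log_gauss_tail \<in> borel_measurable lborel"
  unfolding log_gauss_tail_def by measurable

lemma log_gauss_tail_density_nonneg: "log_gauss_tail_density R s \<ge> 0"
  by (simp add: log_gauss_tail_density_def indicator_def)

lemma log_gauss_tail_nonneg: "log_gauss_tail R \<ge> 0"
  unfolding log_gauss_tail_def by (rule integral_nonneg_AE) (simp add: log_gauss_tail_density_nonneg)

lemma integrable_log_gauss_tail_density:
  assumes R: "R > 0"
  shows "integrable lborel (log_gauss_tail_density R)"
proof (rule Bochner_Integration.integrable_bound)
  let ?B = "\<lambda>s. indicator {0..} s * (s ^ 0 * exp (- s\<^sup>2)) + indicator {0..} s * (s ^ 2 * exp (- s\<^sup>2))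
              + \<bar>ln R\<bar> * (indicator {0..} s * (s ^ 1 * exp (- s\<^sup>2)))"
  show "integrable lborel ?B"
    by (intro Bochner_Integration.integrable_add integrable_mult_right integrable_gaussian_moment_pos)
  show "AE s in lborel. norm (log_gauss_tail_density R s) \<le> norm (?B s)"
  proof (rule AE_I2)
    fix s :: real
    show "norm (log_gauss_tail_density R s) \<le> norm (?B s)"
    proof (cases "s > 0")
      case True
      define E where "E = exp (- s\<^sup>2)"
      have E: "E > 0" by (simp add: E_def)
      have "norm (log_gauss_tail_density R s) = E * s * max 0 (ln s - ln R)"
        using True by (simp add: log_gauss_tail_density_def E_def)
      also have "\<dots> \<le> E * (s * \<bar>ln s\<bar>) + E * s * \<bar>ln R\<bar>"
        using True E mult_left_mono[of "max 0 (ln s - ln R)" "\<bar>ln s\<bar> + \<bar>ln R\<bar>" "E * s"]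
        by (simp add: algebra_simps)
      also have "\<dots> \<le> E * (1 + s\<^sup>2) + E * s * \<bar>ln R\<bar>"
        using x_abs_ln_le[OF True] E by simp
      also have "\<dots> \<le> norm (?B s)" using True by (simp add: E_def algebra_simps)
      finally show ?thesis .
    qed (simp add: log_gauss_tail_density_def)
  qed
qed simp

lemma integral_rhoT_radial_max_ln:
  assumes R: "R > 0"
  shows "(\<integral>a. rhoT_radial a * max (ln R) (ln a) \<partial>lborel) = - (2 / pi) * (ln R / 2 + log_gauss_tail R)"
proof -
  have split: "rhoT_radial a * max (ln R) (ln a)
      = - (2 / pi) * (ln R * (indicator {0<..} a * (a ^ (2 * 0 + 1) * exp (- a\<^sup>2)))
                      + log_gauss_tail_density R a)" for a
    by (cases "a > 0")
      (auto simp: rhoT_radial_def log_gauss_tail_density_def indicator_def max_def field_simps)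
  note gauss = has_bochner_integral_gaussian_odd_moment_pos[of 0]
  show ?thesis
    unfolding split log_gauss_tail_def
    using integrable.intros[OF gauss] has_bochner_integral_integral_eq[OF gauss]
      integrable_log_gauss_tail_density[OF R]
    by (simp add: integral_add)
qed

lemma CC_inner_eq_log_gauss_tail:
  assumes r: "r \<noteq> 0"
  shows "CC_inner r = - (2 / pi) * log_gauss_tail (norm r)"
proof -
  have "CC_inner r = - (2 / pi) * (ln (norm r) / 2 + log_gauss_tail (norm r)) + 1 / pi * ln (norm r)"
    using integral_ln_norm_rhoT[OF r] integral_rhoT_radial_max_ln[of "norm r"] r
    by (simp add: CC_inner_def)
  then show ?thesis by (simp add: field_simps)
qed

section \<open>The outer integral\<close>

lemma nn_integral_x_ln_ratio:
  fixes s :: real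
  assumes s: "s > 0"
  shows "(\<integral>\<^sup>+a. ennreal (indicator {0<..<s} a * (a * (ln s - ln a))) \<partial>lborel) = ennreal (s\<^sup>2 / 4)"
proof -
  define \<Phi> where "\<Phi> = (\<lambda>a::real. a\<^sup>2 / 2 * ln s - a\<^sup>2 / 2 * ln a + a\<^sup>2 / 4)"
  have \<Phi>_deriv: "(\<Phi> has_real_derivative (x * (ln s - ln x))) (at x)" if "x > 0" for x
    unfolding \<Phi>_def using that by (auto intro!: derivative_eq_intros simp: field_simps power2_eq_square)
  have "((\<lambda>a::real. a\<^sup>2 * ln a) \<longlongrightarrow> 0) (at_right 0)" by real_asymp
  then have "((\<lambda>a. a\<^sup>2 / 2 * ln s - (a\<^sup>2 * ln a) / 2 + a\<^sup>2 / 4) \<longlongrightarrow> 0 / 2 * ln s - 0 / 2 + 0 / 4) (at_right 0)"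
    by (intro tendsto_intros) (auto intro!: tendsto_eq_intros)
  then have "(\<Phi> \<longlongrightarrow> \<Phi> 0) (at_right 0)" by (simp add: \<Phi>_def)
  moreover have "(\<Phi> \<longlongrightarrow> \<Phi> s) (at_left s)"
    using DERIV_isCont[OF \<Phi>_deriv[OF s]] by (simp add: isCont_def filterlim_at_split)
  ultimately have "continuous_on {0..s} \<Phi>"
    by (intro continuous_on_IccI[OF _ _ _ s]) (auto intro!: isContD[OF DERIV_isCont[OF \<Phi>_deriv]])
  then have "((\<lambda>x. x * (ln s - ln x)) has_integral (\<Phi> s - \<Phi> 0)) {0..s}"
    by (intro fundamental_theorem_of_calculus_interior)
      (use s \<Phi>_deriv in \<open>auto simp: has_real_derivative_iff_has_vector_derivative[symmetric]\<close>)
  moreover have "\<Phi> s - \<Phi> 0 = s\<^sup>2 / 4" by (simp add: \<Phi>_def)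
  ultimately have FTC: "((\<lambda>x. x * (ln s - ln x)) has_integral (s\<^sup>2 / 4)) {0..s}" by simp
  have "(\<lambda>a. indicator {0<..<s} a * (a * (ln s - ln a)))
      = (\<lambda>a. if a \<in> {0..s} then a * (ln s - ln a) else 0)"
    by (rule ext) (auto simp: indicator_def)
  then have "((\<lambda>a. indicator {0<..<s} a * (a * (ln s - ln a))) has_integral (s\<^sup>2 / 4)) UNIV"
    using FTC by (simp only: has_integral_restrict_UNIV)
  moreover have "0 \<le> indicator {0<..<s} a * (a * (ln s - ln a))" for a
    by (auto simp: indicator_def)
  ultimately show ?thesis by (intro nn_integral_has_integral_lborel) auto
qed

lemma x_log_gauss_tail_density:
  assumes s: "s > 0"
  shows "indicator {0<..} a * (a * log_gauss_tail_density a s)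
       = s * exp (- s\<^sup>2) * (indicator {0<..<s} a * (a * (ln s - ln a)))"
proof (cases "0 < a \<and> a < s")
  case True
  then have "ln a < ln s" by simp
  with True show ?thesis by (simp add: log_gauss_tail_density_def indicator_def max_def)
next
  case False
  moreover have "ln s \<le> ln a" if "s \<le> a" "a > 0" using that s by simp
  ultimately show ?thesis using s by (auto simp: log_gauss_tail_density_def indicator_def max_def)
qed

lemma ennreal_x_log_gauss_tail:
  "ennreal (indicator {0<..} a * (a * log_gauss_tail a))
     = (\<integral>\<^sup>+s. ennreal (indicator {0<..} a * (a * log_gauss_tail_density a s)) \<partial>lborel)"
proof (cases "a > 0")
  case True
  have "(\<integral>\<^sup>+s. ennreal (a * log_gauss_tail_density a s) \<partial>lborel) = (\<integral>s. a * log_gauss_tail_density a s \<partial>lborel)"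
    using True integrable_log_gauss_tail_density[OF True] log_gauss_tail_density_nonneg
    by (intro nn_integral_eq_integral) auto
  with True show ?thesis by (simp add: log_gauss_tail_def)
qed simp

lemma nn_integral_x_log_gauss_tail_density:
  "(\<integral>\<^sup>+a. ennreal (indicator {0<..} a * (a * log_gauss_tail_density a s)) \<partial>lborel)
     = ennreal (indicator {0<..} s * (s ^ (2 * 1 + 1) * exp (- s\<^sup>2)) / 4)"
proof (cases "s > 0")
  case True
  have "(\<integral>\<^sup>+a. ennreal (indicator {0<..} a * (a * log_gauss_tail_density a s)) \<partial>lborel)
      = ennreal (s * exp (- s\<^sup>2)) * (\<integral>\<^sup>+a. ennreal (indicator {0<..<s} a * (a * (ln s - ln a))) \<partial>lborel)"
    unfolding x_log_gauss_tail_density[OF True] using True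
    by (subst nn_integral_cmult[symmetric]) (auto simp: ennreal_mult indicator_def)
  also have "\<dots> = ennreal (s * exp (- s\<^sup>2) * (s\<^sup>2 / 4))"
    using True by (simp add: nn_integral_x_ln_ratio ennreal_mult'[symmetric])
  finally show ?thesis using True by (simp add: power2_eq_square power3_eq_cube)
qed (simp add: log_gauss_tail_density_def)

text \<open>Tonelli: integrating \<open>a\<close> out first turns the double integral into a Gaussian moment.\<close>
lemma nn_integral_x_log_gauss_tail:
  "(\<integral>\<^sup>+a. ennreal (indicator {0<..} a * (a * log_gauss_tail a)) \<partial>lborel) = ennreal (1 / 8)"
proof -
  have "(\<integral>\<^sup>+a. ennreal (indicator {0<..} a * (a * log_gauss_tail a)) \<partial>lborel)
      = (\<integral>\<^sup>+a. (\<integral>\<^sup>+s. ennreal (indicator {0<..} a * (a * log_gauss_tail_density a s)) \<partial>lborel) \<partial>lborel)"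
    by (simp only: ennreal_x_log_gauss_tail)
  also have "\<dots> = (\<integral>\<^sup>+s. (\<integral>\<^sup>+a. ennreal (indicator {0<..} a * (a * log_gauss_tail_density a s)) \<partial>lborel) \<partial>lborel)"
    by (rule lborel_pair.Fubini'[symmetric]) measurable
  also have "\<dots> = (\<integral>\<^sup>+s. ennreal (indicator {0<..} s * (s ^ (2 * 1 + 1) * exp (- s\<^sup>2)) / 4) \<partial>lborel)"
    by (simp only: nn_integral_x_log_gauss_tail_density)
  also have "\<dots> = ennreal (fact 1 / 2 / 4)"
    using has_bochner_integral_gaussian_odd_moment_pos[of 1]
    by (subst nn_integral_eq_integral) (auto simp: has_bochner_integral_iff indicator_def)
  finally show ?thesis by simp
qed

lemma
  shows integrable_x_log_gauss_tail: "integrable lborel (\<lambda>a. indicator {0<..} a * (a * log_gauss_tail a))"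
    and integral_x_log_gauss_tail: "(\<integral>a. indicator {0<..} a * (a * log_gauss_tail a) \<partial>lborel) = 1 / 8"
proof -
  have nonneg: "AE a in lborel. 0 \<le> indicator {0<..} a * (a * log_gauss_tail a)"
    using log_gauss_tail_nonneg by (auto simp: indicator_def)
  show "integrable lborel (\<lambda>a. indicator {0<..} a * (a * log_gauss_tail a))"
    using nonneg nn_integral_x_log_gauss_tail by (intro integrableI_nonneg) auto
  show "(\<integral>a. indicator {0<..} a * (a * log_gauss_tail a) \<partial>lborel) = 1 / 8"
    using nonneg nn_integral_x_log_gauss_tail by (subst integral_eq_nn_integral) auto
qed

lemma CC_inner_measurable [measurable]: "CC_inner \<in> borel_measurable borel"
proof -
  have [measurable]: "(\<lambda>x. ln (norm (snd x)) * rhoT (fst x) (snd x)) \<in> borel_measurable (borel \<Otimes>\<^sub>M lborel)"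
    unfolding rhoT_def by measurable
  show ?thesis unfolding CC_inner_def by measurable
qed

lemma CC_inner_polar:
  "indicator {0<..} a * indicator {0..<1} b * (2 * pi * a * CC_inner (0 + polar_vec a b))
   = - 4 * (indicator {0<..} a * (a * log_gauss_tail a)) * indicator {0..<1} b"
proof (cases "a > 0")
  case True
  then have norm: "norm (polar_vec a b) = a" by (simp add: norm_polar_vec)
  with True have "polar_vec a b \<noteq> 0" by auto
  with norm have "CC_inner (0 + polar_vec a b) = - (2 / pi) * log_gauss_tail a"
    by (simp add: CC_inner_eq_log_gauss_tail)
  with True show ?thesis by (simp add: indicator_def)
qed simp

lemma
  shows integrable_CC_inner: "integrable lborel CC_inner"
    and integral_CC_inner: "(\<integral>r. CC_inner r \<partial>lborel) = - 1 / 2"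
proof -
  let ?c = "\<lambda>a. - 4 * (indicator {0<..} a * (a * log_gauss_tail a))"
  have "(\<integral>b. norm (?c a * indicator {0..<1} (b::real)) \<partial>lborel) = \<bar>?c a\<bar>" for a
    by (simp add: abs_mult)
  then have "integrable lborel (\<lambda>a. \<integral>b. norm (?c a * indicator {0..<1} (b::real)) \<partial>lborel)"
    using integrable_x_log_gauss_tail by (simp add: integrable_abs)
  moreover have "AE a in lborel. integrable lborel (\<lambda>b. ?c a * indicator {0..<1} (b::real))"
    by (simp add: integrable_real_indicator)
  ultimately have "integrable lborel CC_inner"
    and "(\<integral>r. CC_inner r \<partial>lborel) = (\<integral>a. (\<integral>b. ?c a * indicator {0..<1} (b::real) \<partial>lborel) \<partial>lborel)"
    using lborel_integral_polar[OF CC_inner_measurable, of 0, unfolded CC_inner_polar] by auto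
  then show "integrable lborel CC_inner" "(\<integral>r. CC_inner r \<partial>lborel) = - 1 / 2"
    using integral_x_log_gauss_tail by simp_all
qed

theorem mainTheorem2:
  fixes \<beta> :: real
  assumes "\<beta> = 2"
  shows "(\<forall>r::real^2. r \<noteq> 0 \<longrightarrow> integrable lborel (\<lambda>r'. ln (norm r') * rhoT r r'))
    \<and> integrable lborel CC_inner
    \<and> - \<beta> * (\<integral>r. CC_inner r \<partial>lborel) = 1"
  using integrable_ln_norm_rhoT integrable_CC_inner integral_CC_inner assms by simp

end
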